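(* Let $\mathcal{V}$ be a real, separable, infinite-dimensional Hilbert space with orthonormal basis $(e_n)_{n\ge1}$. Let $\mathcal{X}=\{v=\sum_{n\ge1}c_ne_n\in\mathcal{V}:\sum_{n\ge1}|c_n|\le1\}$ and $\mathcal{Y}=\{v\in\mathcal{V}:\|v\|\le1\}$. Then there exists a class $\mathcal{F}\subset S_1(\mathcal{V},\mathcal{V})$ such that for every $T\in\mathbb{N}$: (i) $\mathrm{Rad}_T(\mathcal{F})\ge T/2$; (ii) $\inf_{\mathcal{A}}\mathtt{R}_{\mathcal{A}}(T,\mathcal{F})\le 2+8\sqrt{T\ln(2T)}$. In particular $\mathcal{F}$ is online learnable but sequential uniform convergence fails for its squared-loss class.
   Context: $S_1(\mathcal{V},\mathcal{V})$ is the set of compact linear operators $f:\mathcal{V}\to\mathcal{V}$ whose singular values are summable (trace class). Online protocol with instance space $\mathcal{X}$ and target space $\mathcal{Y}$: for $t=1,\dots,T$, an adversary picks $(x_t,y_t)\in\mathcal{X}\times\mathcal{Y}$ and reveals $x_t$; the learner $\mathcal{A}$, using past labeled examples and $x_t$ (and possibly internal randomness), predicts $\mathcal{A}(x_t)\in\mathcal{Y}$, then $y_t$ is revealed. The regret is \[\mathtt{R}_{\mathcal{A}}(T,\mathcal{F})=\sup_{(x_1,y_1),\dots,(x_T,y_T)\in\mathcal{X}\times\mathcal{Y}}\mathbb{E}\Big[\sum_{t=1}^T\|\mathcal{A}(x_t)-y_t\|^2-\inf_{f\in\mathcal{F}}\sum_{t=1}^T\|f(x_t)-y_t\|^2\Big].\]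 Sequential Rademacher complexity: with $\sigma_1,\dots,\sigma_T$ i.i.d. uniform on $\{-1,1\}$ and $\sigma_{<t}=(\sigma_1,\dots,\sigma_{t-1})$, \[\mathrm{Rad}_T(\mathcal{F})=\sup_{x,y}\mathbb{E}_\sigma\Big[\sup_{f\in\mathcal{F}}\sum_{t=1}^T\sigma_t\|f(x_t(\sigma_{<t}))-y_t(\sigma_{<t})\|^2\Big],\] the supremum over all sequences of maps $(x_t,y_t):\{-1,1\}^{t-1}\to\mathcal{X}\times\mathcal{Y}$. *)

theory Defs
  imports "HOL-Probability.Probability"
begin

text \<open>Singular values of a bounded operator on a Hilbert space, via approximation
  numbers: the n-th singular value (0-indexed) is the distance (in operator norm)
  from f to the bounded linear operators of rank at most n. For compact operators
  on Hilbert spaces these coincide with the singular values.\<close>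
definition singular_value :: "('a::real_normed_vector \<Rightarrow> 'a) \<Rightarrow> nat \<Rightarrow> real" where
  "singular_value f n = Inf {onorm (\<lambda>v. f v - g v) | g. bounded_linear g \<and>
      (\<exists>B. finite B \<and> card B \<le> n \<and> range g \<subseteq> span B)}"

definition trace_class :: "('a::real_normed_vector \<Rightarrow> 'a) \<Rightarrow> bool" where
  "trace_class f \<longleftrightarrow> bounded_linear f \<and> compact (closure (f ` cball 0 1))
      \<and> summable (singular_value f)"

text \<open>A deterministic online strategy: given the past labelled examples and the current
  instance, output a prediction.  A (randomized) learner is a probability mass function
  over deterministic strategies (internal randomness), whose predictions lie in Y.\<close>
type_synonym 'a strategy = "('a \<times> 'a) list \<Rightarrow> 'a \<Rightarrow> 'a"

definition learners :: "'a set \<Rightarrow> 'a strategy pmf set" where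
  "learners Y = {P. \<forall>A\<in>set_pmf P. \<forall>h x. A h x \<in> Y}"

definition cum_loss :: "'a::real_normed_vector strategy \<Rightarrow> ('a \<times> 'a) list \<Rightarrow> real" where
  "cum_loss A s = (\<Sum>t<length s. (norm (A (take t s) (fst (s ! t)) - snd (s ! t)))\<^sup>2)"

definition best_loss :: "('a::real_normed_vector \<Rightarrow> 'a) set \<Rightarrow> ('a \<times> 'a) list \<Rightarrow> real" where
  "best_loss F s = (INF f\<in>F. \<Sum>t<length s. (norm (f (fst (s ! t)) - snd (s ! t)))\<^sup>2)"

definition regret :: "'a set \<Rightarrow> 'a set \<Rightarrow> nat \<Rightarrow> ('a::real_normed_vector \<Rightarrow> 'a) set
    \<Rightarrow> 'a strategy pmf \<Rightarrow> ereal" where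
  "regret X Y T F P = (SUP s\<in>{s. length s = T \<and> set s \<subseteq> X \<times> Y}.
      ereal (measure_pmf.expectation P (\<lambda>A. cum_loss A s - best_loss F s)))"

definition signs :: "nat \<Rightarrow> real list set" where
  "signs T = {\<sigma>. length \<sigma> = T \<and> set \<sigma> \<subseteq> {-1, 1}}"

text \<open>Trees are maps x t, y t from sign prefixes
  (sigma_1..sigma_t, as a list of length t) to X and Y; t ranges over 0..T-1 here.
  The expectation over uniform signs is the average over the 2^T sign vectors.\<close>
definition seq_rad :: "'a set \<Rightarrow> 'a set \<Rightarrow> nat \<Rightarrow> ('a::real_normed_vector \<Rightarrow> 'a) set \<Rightarrow> ereal" where
  "seq_rad X Y T F = (SUP xy\<in>{(x, y). \<forall>t \<sigma>. x t \<sigma> \<in> X \<and> y t \<sigma> \<in> Y}.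
      ereal (1 / 2 ^ T) * (\<Sum>\<sigma>\<in>signs T. SUP f\<in>F.
        ereal (\<Sum>t<T. \<sigma> ! t * (norm (f (fst xy t (take t \<sigma>)) - snd xy t (take t \<sigma>)))\<^sup>2)))"

end

theory Submission
  imports Defs "HOL-Library.Nat_Bijection"
begin

(* The class consists of the rank-one operators x |-> <x, sum of e_n over n in S> e_k, where
   S = set_decode k ranges over all finite sets of indices.  On the tree x_t = e_t, y_t = 0
   the operator with S = {t. sigma_t = 1} attains sum_t sigma_t |f x_t|^2 = #{t. sigma_t = 1},
   whose average over all sign vectors is T/2.

   Learnability: compared with predicting 0, the operator with index k gains at most
   <y_t, e_k>^2 in round t, so by Bessel's inequality at most tau operators have cumulative
   gain at least 1 after tau rounds.  Hence for every k one of the T(T+1) experts "predict 0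
   for tau rounds, then follow the i-th operator whose gain has reached 1" loses at most 2
   more than the operator k (take tau the round at which its gain first reaches 1).
   Exponential weights over these experts, with squared losses in [0,4] and the convexity of
   the squared loss, cost another ln(T(T+1))/eta + 8 eta T <= 8 sqrt(T ln(2T)) for the
   tuned eta. *)

lemma trace_class_rank_one:
  fixes w u :: "'a::real_inner"
  shows "trace_class (\<lambda>x. (x \<bullet> w) *\<^sub>R u)"
proof -
  let ?f = "\<lambda>x. (x \<bullet> w) *\<^sub>R u"
  have linear: "bounded_linear ?f"
    by (intro bounded_linear_compose[OF bounded_linear_scaleR_left] bounded_linear_inner_left)
  define K where "K = (\<lambda>c. c *\<^sub>R u) ` {-norm w..norm w}"
  have "compact K"
    unfolding K_def by (intro compact_continuous_image continuous_intros compact_Icc)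
  moreover have "?f ` cball 0 1 \<subseteq> K"
  proof
    fix z assume "z \<in> ?f ` cball 0 1"
    then obtain x where x: "norm x \<le> 1" "z = ?f x" by auto
    have "\<bar>x \<bullet> w\<bar> \<le> norm x * norm w" by (rule Cauchy_Schwarz_ineq2)
    also have "\<dots> \<le> norm w" using x(1) by (simp add: mult_left_le_one_le)
    finally show "z \<in> K"
      unfolding K_def using x(2) by (intro image_eqI[of _ _ "x \<bullet> w"]) (auto simp: abs_le_iff)
  qed
  ultimately have "closure (?f ` cball 0 1) \<subseteq> K"
    by (intro closure_minimal compact_imp_closed)
  with \<open>compact K\<close> have compact: "compact (closure (?f ` cball 0 1))"
    by (metis Int_absorb1 closed_closure compact_Int_closed)
  have "singular_value ?f n = 0" if "1 \<le> n" for n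
    unfolding singular_value_def
  proof (rule cInf_eq_minimum)
    have "range ?f \<subseteq> span {u}" by (auto intro: span_base span_scale)
    then show "0 \<in> {onorm (\<lambda>v. ?f v - g v) |g. bounded_linear g \<and>
        (\<exists>B. finite B \<and> card B \<le> n \<and> range g \<subseteq> span B)}"
      using linear that by (intro CollectI exI[of _ ?f]) (auto intro!: exI[of _ "{u}"] simp: onorm_zero)
  next
    fix x assume "x \<in> {onorm (\<lambda>v. ?f v - g v) |g. bounded_linear g \<and>
        (\<exists>B. finite B \<and> card B \<le> n \<and> range g \<subseteq> span B)}"
    then show "0 \<le> x" using linear by (auto intro!: onorm_pos_le bounded_linear_sub)
  qed
  then have "summable (singular_value ?f)"
    by (intro summable_finite[of "{0}"]) auto
  with linear compact show ?thesis
    unfolding trace_class_def by blast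
qed

lemma bessel_inequality:
  fixes e :: "'j \<Rightarrow> 'a::real_inner"
  assumes "finite D"
    and orthonormal: "\<And>i j. i \<in> D \<Longrightarrow> j \<in> D \<Longrightarrow> e i \<bullet> e j = (if i = j then 1 else 0)"
  shows "(\<Sum>k\<in>D. (y \<bullet> e k)\<^sup>2) \<le> (norm y)\<^sup>2"
proof -
  define z where "z = (\<Sum>k\<in>D. (y \<bullet> e k) *\<^sub>R e k)"
  have zz: "z \<bullet> z = (\<Sum>k\<in>D. (y \<bullet> e k)\<^sup>2)"
    unfolding z_def inner_sum_left inner_sum_right
    by (simp add: orthonormal if_distrib power2_eq_square assms(1) cong: sum.cong if_cong)
  have yz: "y \<bullet> z = (\<Sum>k\<in>D. (y \<bullet> e k)\<^sup>2)"
    unfolding z_def inner_sum_right by (simp add: power2_eq_square)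
  have "0 \<le> (y - z) \<bullet> (y - z)" by simp
  also have "\<dots> = y \<bullet> y - 2 * (y \<bullet> z) + z \<bullet> z"
    by (simp add: inner_diff_left inner_diff_right inner_commute)
  finally show ?thesis using zz yz by (simp add: power2_norm_eq_inner)
qed

lemma norm_sq_minus_dist_sq_le:
  fixes u y :: "'a::real_inner"
  assumes "norm u = 1"
  shows "(norm y)\<^sup>2 - (norm (c *\<^sub>R u - y))\<^sup>2 \<le> (y \<bullet> u)\<^sup>2"
proof -
  have "u \<bullet> u = 1" using assms by (simp flip: power2_norm_eq_inner)
  then have "(norm (c *\<^sub>R u - y))\<^sup>2 = c\<^sup>2 - 2 * c * (y \<bullet> u) + (norm y)\<^sup>2"
    unfolding power2_norm_eq_inner
    by (simp add: inner_diff_left inner_diff_right inner_commute power2_eq_square algebra_simps)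
  moreover have "0 \<le> (c - y \<bullet> u)\<^sup>2" by simp
  ultimately show ?thesis by (simp add: power2_diff)
qed

lemma convex_on_dist_sq:
  fixes y :: "'a::real_inner"
  shows "convex_on UNIV (\<lambda>z. (norm (z - y))\<^sup>2)"
proof (rule convex_onI)
  fix t :: real and a b :: 'a
  have "(1 - t) * (norm (a - y))\<^sup>2 + t * (norm (b - y))\<^sup>2 - (norm ((1 - t) *\<^sub>R a + t *\<^sub>R b - y))\<^sup>2
      = t * (1 - t) * (norm (a - b))\<^sup>2"
    unfolding power2_norm_eq_inner
    by (simp add: inner_diff_left inner_diff_right inner_add_left inner_add_right inner_commute
        algebra_simps)
  moreover assume "0 < t" "t < 1"
  ultimately show "(norm ((1 - t) *\<^sub>R a + t *\<^sub>R b - y))\<^sup>2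
      \<le> (1 - t) * (norm (a - y))\<^sup>2 + t * (norm (b - y))\<^sup>2"
    by (smt (verit) mult_nonneg_nonneg zero_le_power2)
qed simp

lemma weighted_mean_eq_convex_combination:
  fixes z :: "'j \<Rightarrow> 'a::real_vector"
  shows "(\<Sum>j\<in>J. w j *\<^sub>R z j) /\<^sub>R sum w J = (\<Sum>j\<in>J. (w j / sum w J) *\<^sub>R z j)"
  by (simp add: scaleR_sum_right divide_inverse_commute)

lemma weighted_mean_in_convex:
  fixes z :: "'j \<Rightarrow> 'a::real_vector"
  assumes "finite J" "convex C" "\<And>j. j \<in> J \<Longrightarrow> 0 \<le> w j" "0 < sum w J"
    and "\<And>j. j \<in> J \<Longrightarrow> z j \<in> C"
  shows "(\<Sum>j\<in>J. w j *\<^sub>R z j) /\<^sub>R sum w J \<in> C"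
  unfolding weighted_mean_eq_convex_combination
  using assms by (intro convex_sum) (auto simp: sum_divide_distrib[symmetric])

lemma dist_sq_weighted_mean_le:
  fixes z :: "'j \<Rightarrow> 'a::real_inner"
  assumes "finite J" "\<And>j. j \<in> J \<Longrightarrow> 0 \<le> w j" "0 < sum w J"
  shows "(norm ((\<Sum>j\<in>J. w j *\<^sub>R z j) /\<^sub>R sum w J - y))\<^sup>2
     \<le> (\<Sum>j\<in>J. w j * (norm (z j - y))\<^sup>2) / sum w J"
  unfolding weighted_mean_eq_convex_combination sum_divide_distrib
  using assms
  by (intro order.trans[OF convex_on_sum[OF _ _ convex_on_dist_sq]])
     (auto simp: sum_divide_distrib[symmetric])

lemma exp_neg_le_quadratic:
  fixes x :: real
  assumes "0 \<le> x"
  shows "exp (- x) \<le> 1 - x + x\<^sup>2 / 2"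
proof -
  let ?g = "\<lambda>x::real. 1 - x + x\<^sup>2 / 2 - exp (- x)"
  have "?g 0 \<le> ?g x"
  proof (rule DERIV_nonneg_imp_increasing_open[OF assms])
    fix z :: real
    have "DERIV ?g z :> - 1 + z + exp (- z)"
      by (auto intro!: derivative_eq_intros simp: power2_eq_square)
    moreover assume "0 < z"
    then have "0 \<le> - 1 + z + exp (- z)" using exp_ge_add_one_self[of "- z"] by simp
    ultimately show "\<exists>y. DERIV ?g z :> y \<and> 0 \<le> y" by blast
  qed (auto intro!: continuous_intros)
  then show ?thesis by simp
qed

lemma exp_weights_step:
  fixes w a :: "'j \<Rightarrow> real"
  assumes "finite J" "0 \<le> \<eta>"
    and w: "\<And>j. j \<in> J \<Longrightarrow> 0 < w j"
    and a: "\<And>j. j \<in> J \<Longrightarrow> 0 \<le> a j \<and> a j \<le> B"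
    and r: "r * sum w J \<le> (\<Sum>j\<in>J. w j * a j)"
  shows "(\<Sum>j\<in>J. w j * exp (- \<eta> * a j)) \<le> sum w J * exp (- \<eta> * r + \<eta>\<^sup>2 * B\<^sup>2 / 2)"
proof -
  have "(\<Sum>j\<in>J. w j * exp (- \<eta> * a j)) \<le> (\<Sum>j\<in>J. w j * (1 - \<eta> * a j + \<eta>\<^sup>2 * B\<^sup>2 / 2))"
  proof (intro sum_mono mult_left_mono)
    fix j assume j: "j \<in> J"
    then have "0 \<le> \<eta> * a j" "\<eta> * a j \<le> \<eta> * B" using a \<open>0 \<le> \<eta>\<close> by (auto intro: mult_left_mono)
    then have "exp (- (\<eta> * a j)) \<le> 1 - \<eta> * a j + (\<eta> * a j)\<^sup>2 / 2"
      "(\<eta> * a j)\<^sup>2 \<le> (\<eta> * B)\<^sup>2"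
      by (auto intro: exp_neg_le_quadratic power_mono)
    then show "exp (- \<eta> * a j) \<le> 1 - \<eta> * a j + \<eta>\<^sup>2 * B\<^sup>2 / 2"
      by (simp add: power_mult_distrib)
    show "0 \<le> w j" using w j by (simp add: less_imp_le)
  qed
  also have "\<dots> = (\<Sum>j\<in>J. w j * (1 + \<eta>\<^sup>2 * B\<^sup>2 / 2) - \<eta> * (w j * a j))"
    by (simp add: algebra_simps)
  also have "\<dots> = sum w J * (1 + \<eta>\<^sup>2 * B\<^sup>2 / 2) - \<eta> * (\<Sum>j\<in>J. w j * a j)"
    by (simp add: sum_subtractf sum_distrib_left sum_distrib_right)
  also have "\<dots> \<le> sum w J * (1 + (- \<eta> * r + \<eta>\<^sup>2 * B\<^sup>2 / 2))"
    using mult_left_mono[OF r \<open>0 \<le> \<eta>\<close>] by (simp add: algebra_simps)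
  also have "\<dots> \<le> sum w J * exp (- \<eta> * r + \<eta>\<^sup>2 * B\<^sup>2 / 2)"
    using w by (intro mult_left_mono exp_ge_add_one_self sum_nonneg) (auto intro: less_imp_le)
  finally show ?thesis .
qed

lemma exp_weights_regret:
  fixes l :: "'j \<Rightarrow> nat \<Rightarrow> real" and lrn :: "nat \<Rightarrow> real"
  assumes "finite J" "j0 \<in> J" "0 < \<eta>"
    and l: "\<And>j t. j \<in> J \<Longrightarrow> t < T \<Longrightarrow> 0 \<le> l j t \<and> l j t \<le> B"
    and lrn: "\<And>t. t < T \<Longrightarrow> lrn t \<le>
      (\<Sum>j\<in>J. exp (- \<eta> * (\<Sum>t'<t. l j t')) * l j t) / (\<Sum>j\<in>J. exp (- \<eta> * (\<Sum>t'<t. l j t')))"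
  shows "(\<Sum>t<T. lrn t) \<le> (\<Sum>t<T. l j0 t) + ln (card J) / \<eta> + \<eta> * B\<^sup>2 * T / 2"
proof -
  define W where "W j t = exp (- \<eta> * (\<Sum>t'<t. l j t'))" for j t
  define Z where "Z t = (\<Sum>j\<in>J. W j t)" for t
  have Z_pos: "0 < Z t" for t
    unfolding Z_def W_def using assms(1,2) by (intro sum_pos) auto
  have Z_bound: "Z t \<le> card J * exp (- \<eta> * (\<Sum>t'<t. lrn t') + \<eta>\<^sup>2 * B\<^sup>2 * t / 2)"
    if "t \<le> T" for t
    using that
  proof (induction t)
    case 0
    then show ?case unfolding Z_def W_def by simp
  next
    case (Suc t)
    have "Z (Suc t) = (\<Sum>j\<in>J. W j t * exp (- \<eta> * l j t))"
      unfolding Z_def W_def by (simp add: algebra_simps flip: exp_add)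
    also have "\<dots> \<le> Z t * exp (- \<eta> * lrn t + \<eta>\<^sup>2 * B\<^sup>2 / 2)"
      unfolding Z_def
    proof (rule exp_weights_step[OF assms(1)])
      show "lrn t * sum (\<lambda>j. W j t) J \<le> (\<Sum>j\<in>J. W j t * l j t)"
        using lrn[of t] Z_pos[of t] Suc.prems unfolding Z_def W_def by (simp add: field_simps)
    qed (use \<open>0 < \<eta>\<close> l Suc.prems in \<open>auto simp: W_def\<close>)
    also have "\<dots> \<le> card J * exp (- \<eta> * (\<Sum>t'<t. lrn t') + \<eta>\<^sup>2 * B\<^sup>2 * t / 2)
        * exp (- \<eta> * lrn t + \<eta>\<^sup>2 * B\<^sup>2 / 2)"
      using Suc by (intro mult_right_mono) auto
    also have "\<dots> = card J * exp (- \<eta> * (\<Sum>t'<Suc t. lrn t') + \<eta>\<^sup>2 * B\<^sup>2 * Suc t / 2)"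
      by (simp add: algebra_simps add_divide_distrib flip: exp_add)
    finally show ?case .
  qed
  have "W j0 T \<le> Z T"
    unfolding Z_def W_def using assms(1,2) by (intro member_le_sum) auto
  also have "\<dots> \<le> card J * exp (- \<eta> * (\<Sum>t<T. lrn t) + \<eta>\<^sup>2 * B\<^sup>2 * T / 2)"
    by (rule Z_bound) simp
  finally have "ln (W j0 T) \<le> ln (card J * exp (- \<eta> * (\<Sum>t<T. lrn t) + \<eta>\<^sup>2 * B\<^sup>2 * T / 2))"
    by (rule ln_mono) (simp add: W_def)
  moreover have "0 < card J" using assms(1,2) card_gt_0_iff by blast
  ultimately have "- \<eta> * (\<Sum>t<T. l j0 t) \<le> ln (card J) - \<eta> * (\<Sum>t<T. lrn t) + \<eta>\<^sup>2 * B\<^sup>2 * T / 2"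
    by (simp add: W_def ln_mult)
  then have "\<eta> * (\<Sum>t<T. lrn t) \<le> \<eta> * ((\<Sum>t<T. l j0 t) + ln (card J) / \<eta> + \<eta> * B\<^sup>2 * T / 2)"
    using \<open>0 < \<eta>\<close> by (simp add: algebra_simps power2_eq_square)
  then show ?thesis using \<open>0 < \<eta>\<close> by simp
qed

lemma balanced_sum_sqrt:
  fixes a b :: real
  assumes "0 < a" "0 < b"
  shows "a / sqrt (a / b) + sqrt (a / b) * b = 2 * sqrt (a * b)"
proof -
  define s where "s = sqrt (a / b)"
  have "0 < s" "a = s\<^sup>2 * b"
    using assms by (simp_all add: s_def)
  then have "sqrt (a * b) = s * b" and "a / s = s * b"
    using \<open>0 < b\<close> by (auto intro!: real_sqrt_unique simp: power2_eq_square)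
  then show ?thesis unfolding s_def[symmetric] by simp
qed

definition round_loss :: "'a::real_normed_vector strategy \<Rightarrow> ('a \<times> 'a) list \<Rightarrow> nat \<Rightarrow> real" where
  "round_loss A s t = (norm (A (take t s) (fst (s ! t)) - snd (s ! t)))\<^sup>2"

lemma cum_loss_eq_sum_round_loss: "cum_loss A s = (\<Sum>t<length s. round_loss A s t)"
  unfolding cum_loss_def round_loss_def ..

lemma cum_loss_take: "t \<le> length s \<Longrightarrow> cum_loss A (take t s) = (\<Sum>t'<t. round_loss A s t')"
  unfolding cum_loss_def round_loss_def by (simp add: min_def)

definition clip :: "'a::real_normed_vector \<Rightarrow> 'a" where
  "clip z = (if norm z \<le> 1 then z else z /\<^sub>R norm z)"

lemma norm_clip_le: "norm (clip z) \<le> 1"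
  unfolding clip_def by (auto simp: field_simps)

lemma clip_eq_self: "norm z \<le> 1 \<Longrightarrow> clip z = z"
  unfolding clip_def by simp

definition experts :: "nat \<Rightarrow> (nat \<times> nat) set" where
  "experts T = {0..T} \<times> {0..<T}"

lemma finite_experts: "finite (experts T)"
  unfolding experts_def by simp

lemma experts_nonempty: "1 \<le> T \<Longrightarrow> experts T \<noteq> {}"
  unfolding experts_def by auto

lemma card_experts: "card (experts T) = (T + 1) * T"
  unfolding experts_def by (simp add: card_cartesian_product)

lemma experts_rate:
  assumes "1 \<le> T"
    and \<eta>: "\<eta> = sqrt (ln (card (experts T)) / (8 * real T))"
  shows "0 < \<eta>" and "ln (card (experts T)) / \<eta> + \<eta> * (8 * real T) \<le> 8 * sqrt (real T * ln (2 * real T))"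
proof -
  define N where "N = real (card (experts T))"
  have N: "N = (real T + 1) * real T"
    by (simp add: N_def card_experts algebra_simps)
  have "2 \<le> N"
    using mult_mono[of 2 "real T + 1" 1 "real T"] assms unfolding N by simp
  moreover have "N \<le> (2 * real T)\<^sup>2"
    using mult_right_mono[of "real T + 1" "4 * real T" "real T"] assms
    unfolding N by (simp add: power2_eq_square)
  ultimately have "0 < ln N" and "ln N \<le> ln ((2 * real T)\<^sup>2)"
    by (auto intro: ln_mono)
  note \<open>ln N \<le> ln ((2 * real T)\<^sup>2)\<close>
  also have "ln ((2 * real T)\<^sup>2) = 2 * ln (2 * real T)"
    using \<open>1 \<le> T\<close> by (subst ln_realpow) auto
  finally have ln_N: "ln N \<le> 2 * ln (2 * real T)" .
  show "0 < \<eta>" using \<open>0 < ln N\<close> \<eta> \<open>1 \<le> T\<close> by (simp add: N_def)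
  have "ln N / \<eta> + \<eta> * (8 * real T) = 2 * sqrt (ln N * (8 * real T))"
    unfolding \<eta> N_def[symmetric] using \<open>0 < ln N\<close> \<open>1 \<le> T\<close> by (intro balanced_sum_sqrt) auto
  also have "\<dots> \<le> 2 * sqrt (16 * (real T * ln (2 * real T)))"
    using mult_left_mono[OF ln_N, of "real T"] by simp
  also have "\<dots> = 8 * sqrt (real T * ln (2 * real T))"
    by (simp add: real_sqrt_mult)
  finally show "ln (card (experts T)) / \<eta> + \<eta> * (8 * real T) \<le> 8 * sqrt (real T * ln (2 * real T))"
    by (simp add: N_def)
qed

lemma card_signs: "card (signs T) = 2 ^ T"
  using card_lists_length_eq[of "{-1, 1::real}" T] unfolding signs_def
  by (simp add: conj_commute numeral_2_eq_2)

lemma sum_signs_count_pos: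
  "(\<Sum>\<sigma>\<in>signs T. \<Sum>t<T. if \<sigma> ! t = 1 then 1 else 0) = real T * 2 ^ T / 2"
proof -
  let ?pos = "\<lambda>\<sigma>::real list. \<Sum>t<T. if \<sigma> ! t = 1 then 1 else (0::real)"
  have neg_signs: "map uminus \<sigma> \<in> signs T" if "\<sigma> \<in> signs T" for \<sigma>
    using that unfolding signs_def by auto
  have reindex: "(\<Sum>\<sigma>\<in>signs T. ?pos (map uminus \<sigma>)) = (\<Sum>\<sigma>\<in>signs T. ?pos \<sigma>)"
    by (rule sum.reindex_bij_witness[of _ "map uminus" "map uminus"]) (auto simp: neg_signs comp_def)
  have pair: "?pos \<sigma> + ?pos (map uminus \<sigma>) = real T" if "\<sigma> \<in> signs T" for \<sigma>
  proof -
    have "\<sigma> ! t = -1 \<or> \<sigma> ! t = 1" if "t < T" for t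
      using \<open>\<sigma> \<in> signs T\<close> that unfolding signs_def by (auto dest!: nth_mem)
    then have "?pos \<sigma> + ?pos (map uminus \<sigma>) = (\<Sum>t<T. 1)"
      unfolding sum.distrib[symmetric] using that by (intro sum.cong) (auto simp: signs_def)
    then show ?thesis by simp
  qed
  have "2 * (\<Sum>\<sigma>\<in>signs T. ?pos \<sigma>) = (\<Sum>\<sigma>\<in>signs T. ?pos \<sigma> + ?pos (map uminus \<sigma>))"
    by (simp add: sum.distrib reindex)
  also have "\<dots> = (\<Sum>\<sigma>\<in>signs T. real T)"
    by (rule sum.cong) (simp_all add: pair)
  finally have "2 * (\<Sum>\<sigma>\<in>signs T. ?pos \<sigma>) = real T * 2 ^ T"
    by (simp add: card_signs)
  then show ?thesis by simp
qed

locale orthonormal_seq =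
  fixes e :: "nat \<Rightarrow> 'a::real_inner"
  assumes orthonormal: "e i \<bullet> e j = (if i = j then 1 else 0)"
begin

lemma norm_e [simp]: "norm (e k) = 1"
  using orthonormal[of k k] by (simp add: norm_eq_sqrt_inner)

definition l1_ball :: "'a set" where
  "l1_ball = {v. summable (\<lambda>n. \<bar>v \<bullet> e n\<bar>) \<and> (\<Sum>n. \<bar>v \<bullet> e n\<bar>) \<le> 1}"

lemma e_in_l1_ball: "e t \<in> l1_ball"
proof -
  have "(\<lambda>n. \<bar>e t \<bullet> e n\<bar>) = (\<lambda>n. if n = t then 1 else 0)"
    by (auto simp: orthonormal)
  moreover have "(\<lambda>n. if n = t then 1 else (0::real)) sums 1"
    using sums_single[of t "\<lambda>_. 1::real"] by simp
  ultimately show ?thesis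
    unfolding l1_ball_def by (simp add: sums_iff)
qed

definition selector :: "nat \<Rightarrow> 'a \<Rightarrow> 'a" where
  "selector k x = (x \<bullet> (\<Sum>n\<in>set_decode k. e n)) *\<^sub>R e k"

lemma trace_class_selector: "trace_class (selector k)"
  unfolding selector_def[abs_def] by (rule trace_class_rank_one)

lemma norm_selector_e: "norm (selector k (e t)) = (if t \<in> set_decode k then 1 else 0)"
  unfolding selector_def inner_sum_right by (simp add: orthonormal)

lemma norm_selector_le: "x \<in> l1_ball \<Longrightarrow> norm (selector k x) \<le> 1"
proof -
  assume "x \<in> l1_ball"
  then have "summable (\<lambda>n. \<bar>x \<bullet> e n\<bar>)" "(\<Sum>n. \<bar>x \<bullet> e n\<bar>) \<le> 1"
    by (auto simp: l1_ball_def)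
  have "norm (selector k x) = \<bar>\<Sum>n\<in>set_decode k. x \<bullet> e n\<bar>"
    unfolding selector_def inner_sum_right by simp
  also have "\<dots> \<le> (\<Sum>n\<in>set_decode k. \<bar>x \<bullet> e n\<bar>)"
    by (rule sum_abs)
  also have "\<dots> \<le> (\<Sum>n. \<bar>x \<bullet> e n\<bar>)"
    using \<open>summable _\<close> by (intro sum_le_suminf) auto
  finally show ?thesis using \<open>(\<Sum>n. _) \<le> 1\<close> by simp
qed

lemma seq_rad_selectors_ge:
  assumes "range e \<subseteq> X" "0 \<in> Y"
  shows "ereal (real T / 2) \<le> seq_rad X Y T (range selector)"
proof -
  let ?xy = "(\<lambda>t (\<sigma>::real list). e t, \<lambda>(t::nat) (\<sigma>::real list). 0::'a)"
  have tree: "?xy \<in> {(x, y). \<forall>t \<sigma>. x t \<sigma> \<in> X \<and> y t \<sigma> \<in> Y}"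
    using assms by auto
  have pos_le_SUP: "ereal (\<Sum>t<T. if \<sigma> ! t = 1 then 1 else 0) \<le> (SUP f\<in>range selector.
        ereal (\<Sum>t<T. \<sigma> ! t * (norm (f (fst ?xy t (take t \<sigma>)) - snd ?xy t (take t \<sigma>)))\<^sup>2))"
    for \<sigma> :: "real list"
  proof (rule SUP_upper2)
    let ?k = "set_encode {t. t < T \<and> \<sigma> ! t = 1}"
    show "selector ?k \<in> range selector" by simp
    show "ereal (\<Sum>t<T. if \<sigma> ! t = 1 then 1 else 0) \<le>
        ereal (\<Sum>t<T. \<sigma> ! t * (norm (selector ?k (fst ?xy t (take t \<sigma>)) - snd ?xy t (take t \<sigma>)))\<^sup>2)"
      by (auto simp: norm_selector_e intro!: sum_mono)
  qed
  have "ereal (real T / 2) = ereal (1 / 2 ^ T) *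
      (\<Sum>\<sigma>\<in>signs T. ereal (\<Sum>t<T. if \<sigma> ! t = 1 then 1 else 0))"
    by (simp add: sum_signs_count_pos)
  also have "\<dots> \<le> ereal (1 / 2 ^ T) * (\<Sum>\<sigma>\<in>signs T. SUP f\<in>range selector.
        ereal (\<Sum>t<T. \<sigma> ! t * (norm (f (fst ?xy t (take t \<sigma>)) - snd ?xy t (take t \<sigma>)))\<^sup>2))"
    by (intro ereal_mult_left_mono sum_mono pos_le_SUP) auto
  also have "\<dots> \<le> seq_rad X Y T (range selector)"
    unfolding seq_rad_def by (rule SUP_upper[OF tree])
  finally show ?thesis .
qed

definition gain :: "nat \<Rightarrow> 'a \<times> 'a \<Rightarrow> real" where
  "gain k p = (norm (snd p))\<^sup>2 - (norm (selector k (fst p) - snd p))\<^sup>2"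

lemma gain_le_one: "norm (snd p) \<le> 1 \<Longrightarrow> gain k p \<le> 1"
  unfolding gain_def by (smt (verit) norm_ge_zero power_le_one zero_le_power2)

lemma gain_le_inner_sq: "gain k p \<le> (snd p \<bullet> e k)\<^sup>2"
  unfolding gain_def selector_def by (rule norm_sq_minus_dist_sq_le) simp

definition cum_gain :: "nat \<Rightarrow> ('a \<times> 'a) list \<Rightarrow> real" where
  "cum_gain k h = (\<Sum>t<length h. gain k (h ! t))"

lemma cum_gain_take: "\<tau> \<le> length s \<Longrightarrow> cum_gain k (take \<tau> s) = (\<Sum>t<\<tau>. gain k (s ! t))"
  unfolding cum_gain_def by (simp add: min_def)

definition leaders :: "nat \<Rightarrow> ('a \<times> 'a) list \<Rightarrow> nat set" where
  "leaders \<tau> h = {k. 1 \<le> cum_gain k (take \<tau> h)}"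

lemma leaders_0 [simp]: "leaders 0 h = {}"
  unfolding leaders_def cum_gain_def by simp

lemma leaders_take: "\<tau> \<le> t \<Longrightarrow> leaders \<tau> (take t s) = leaders \<tau> s"
  unfolding leaders_def by (simp add: min_def)

(* Every leader has gained at least 1 in the first tau rounds, whereas by Bessel's inequality
   all operators together gain at most the sum of |y_t|^2 <= tau. *)
lemma card_le_if_subset_leaders:
  assumes "finite D" "D \<subseteq> leaders \<tau> s" "\<tau> \<le> length s"
    and bounded: "\<And>t. t < \<tau> \<Longrightarrow> norm (snd (s ! t)) \<le> 1"
  shows "card D \<le> \<tau>"
proof -
  have "real (card D) = (\<Sum>k\<in>D. 1)"
    by simp
  also have "\<dots> \<le> (\<Sum>k\<in>D. cum_gain k (take \<tau> s))"
    using assms(2) by (intro sum_mono) (auto simp: leaders_def)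
  also have "\<dots> = (\<Sum>t<\<tau>. \<Sum>k\<in>D. gain k (s ! t))"
    using \<open>\<tau> \<le> length s\<close> by (simp add: cum_gain_take sum.swap[of _ D])
  also have "\<dots> \<le> (\<Sum>t<\<tau>. \<Sum>k\<in>D. (snd (s ! t) \<bullet> e k)\<^sup>2)"
    by (intro sum_mono gain_le_inner_sq)
  also have "\<dots> \<le> (\<Sum>t<\<tau>. (norm (snd (s ! t)))\<^sup>2)"
    using \<open>finite D\<close> by (intro sum_mono bessel_inequality) (auto simp: orthonormal)
  also have "\<dots> \<le> (\<Sum>t<\<tau>. 1)"
    using bounded by (intro sum_mono) (simp add: power_le_one)
  finally show ?thesis by simp
qed

lemma finite_leaders:
  assumes "\<tau> \<le> length s" "\<And>t. t < \<tau> \<Longrightarrow> norm (snd (s ! t)) \<le> 1"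
  shows "finite (leaders \<tau> s)"
proof (rule ccontr)
  assume "infinite (leaders \<tau> s)"
  then obtain D where "finite D" "card D = Suc \<tau>" "D \<subseteq> leaders \<tau> s"
    using infinite_arbitrarily_large by blast
  with card_le_if_subset_leaders[OF _ _ assms] show False by fastforce
qed

lemma card_leaders_le:
  assumes "\<tau> \<le> length s" "\<And>t. t < \<tau> \<Longrightarrow> norm (snd (s ! t)) \<le> 1"
  shows "card (leaders \<tau> s) \<le> \<tau>"
  using card_le_if_subset_leaders[OF finite_leaders[OF assms] _ assms] by blast

lemma exists_leader_time:
  assumes "1 \<le> cum_gain k s" "\<And>t. t < length s \<Longrightarrow> norm (snd (s ! t)) \<le> 1"
  obtains \<tau> where "\<tau> \<le> length s" "k \<in> leaders \<tau> s" "cum_gain k (take \<tau> s) \<le> 2"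
proof -
  define \<tau> where "\<tau> = (LEAST m. 1 \<le> cum_gain k (take m s))"
  have "\<tau> \<le> length s" "1 \<le> cum_gain k (take \<tau> s)"
    using assms(1) unfolding \<tau>_def by (auto intro: Least_le LeastI[of _ "length s"])
  moreover have "\<tau> \<noteq> 0"
    using \<open>1 \<le> cum_gain k (take \<tau> s)\<close> by (intro notI) (simp add: cum_gain_def)
  then have "\<not> 1 \<le> cum_gain k (take (\<tau> - 1) s)"
    unfolding \<tau>_def by (intro not_less_Least) (simp add: \<tau>_def[symmetric])
  moreover have "cum_gain k (take \<tau> s) = cum_gain k (take (\<tau> - 1) s) + gain k (s ! (\<tau> - 1))"
    using \<open>\<tau> \<le> length s\<close> \<open>\<tau> \<noteq> 0\<close> by (cases \<tau>) (simp_all add: cum_gain_take)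
  moreover have "gain k (s ! (\<tau> - 1)) \<le> 1"
    using \<open>\<tau> \<le> length s\<close> \<open>\<tau> \<noteq> 0\<close> by (intro gain_le_one assms(2)) simp
  ultimately show ?thesis
    by (intro that[of \<tau>]) (auto simp: leaders_def)
qed

(* Clipping is the identity on instances from l1_ball; it only makes the experts predict in
   the unit ball on every input, as learners must. *)
fun expert :: "nat \<times> nat \<Rightarrow> 'a strategy" where
  "expert (\<tau>, i) h x = (if \<tau> \<le> length h \<and> i < card (leaders \<tau> h)
      then clip (selector (sorted_list_of_set (leaders \<tau> h) ! i) x) else 0)"

lemma norm_expert_le: "norm (expert j h x) \<le> 1"
  by (cases j) (simp add: norm_clip_le)

lemma cum_loss_zero_expert: "cum_loss (expert (0, 0)) s = cum_loss (\<lambda>_. selector k) s + cum_gain k s"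
  unfolding cum_loss_def cum_gain_def gain_def by (simp add: sum_subtractf)

lemma cum_loss_following_expert:
  assumes "\<tau> \<le> length s" "i < card (leaders \<tau> s)" "sorted_list_of_set (leaders \<tau> s) ! i = k"
    and "\<And>t. t < length s \<Longrightarrow> fst (s ! t) \<in> l1_ball"
  shows "cum_loss (expert (\<tau>, i)) s = cum_loss (\<lambda>_. selector k) s + cum_gain k (take \<tau> s)"
proof -
  have "round_loss (expert (\<tau>, i)) s t
      = round_loss (\<lambda>_. selector k) s t + (if t < \<tau> then gain k (s ! t) else 0)"
    if "t < length s" for t
  proof (cases "t < \<tau>")
    case True
    then show ?thesis using that by (simp add: round_loss_def gain_def)
  next
    case False
    then have "expert (\<tau>, i) (take t s) (fst (s ! t)) = selector k (fst (s ! t))"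
      using assms that by (simp add: leaders_take clip_eq_self norm_selector_le)
    with False show ?thesis by (simp add: round_loss_def)
  qed
  then have "cum_loss (expert (\<tau>, i)) s
      = cum_loss (\<lambda>_. selector k) s + (\<Sum>t<length s. if t < \<tau> then gain k (s ! t) else 0)"
    by (simp add: cum_loss_eq_sum_round_loss sum.distrib)
  also have "(\<Sum>t<length s. if t < \<tau> then gain k (s ! t) else 0) = cum_gain k (take \<tau> s)"
    using \<open>\<tau> \<le> length s\<close> by (simp add: cum_gain_take sum.If_cases) (rule sum.cong; auto)
  finally show ?thesis .
qed

lemma exists_expert_close:
  assumes "length s = T" "1 \<le> T"
    and X: "\<And>t. t < T \<Longrightarrow> fst (s ! t) \<in> l1_ball"
    and Y: "\<And>t. t < T \<Longrightarrow> norm (snd (s ! t)) \<le> 1"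
  shows "\<exists>j\<in>experts T. cum_loss (expert j) s \<le> cum_loss (\<lambda>_. selector k) s + 2"
proof (cases "cum_gain k s < 1")
  case True
  moreover have "(0, 0) \<in> experts T"
    using \<open>1 \<le> T\<close> by (simp add: experts_def)
  ultimately show ?thesis
    using cum_loss_zero_expert[of s k] by (intro bexI[of _ "(0, 0)"]) auto
next
  case False
  then obtain \<tau> where \<tau>: "\<tau> \<le> length s" "k \<in> leaders \<tau> s" "cum_gain k (take \<tau> s) \<le> 2"
    using exists_leader_time Y \<open>length s = T\<close> by (metis linorder_not_le)
  have "finite (leaders \<tau> s)" "card (leaders \<tau> s) \<le> \<tau>"
    using \<tau>(1) Y \<open>length s = T\<close> by (auto intro!: finite_leaders card_leaders_le)
  then obtain i where i: "i < card (leaders \<tau> s)" "sorted_list_of_set (leaders \<tau> s) ! i = k"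
    using \<tau>(2) by (metis in_set_conv_nth length_sorted_list_of_set set_sorted_list_of_set)
  have "(\<tau>, i) \<in> experts T"
    using \<tau>(1) i(1) \<open>card (leaders \<tau> s) \<le> \<tau>\<close> \<open>length s = T\<close> by (simp add: experts_def)
  moreover have "cum_loss (expert (\<tau>, i)) s = cum_loss (\<lambda>_. selector k) s + cum_gain k (take \<tau> s)"
    using \<tau>(1) i X \<open>length s = T\<close> by (intro cum_loss_following_expert) auto
  ultimately show ?thesis
    using \<tau>(3) by (intro bexI[of _ "(\<tau>, i)"]) simp_all
qed

definition hedge :: "nat \<Rightarrow> real \<Rightarrow> 'a strategy" where
  "hedge T \<eta> h x = (\<Sum>j\<in>experts T. exp (- \<eta> * cum_loss (expert j) h) *\<^sub>R expert j h x)
      /\<^sub>R (\<Sum>j\<in>experts T. exp (- \<eta> * cum_loss (expert j) h))"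

lemma hedge_in_learners:
  assumes "1 \<le> T"
  shows "return_pmf (hedge T \<eta>) \<in> learners (cball 0 1)"
proof -
  have "hedge T \<eta> h x \<in> cball 0 1" for h x
    unfolding hedge_def using finite_experts experts_nonempty[OF assms] norm_expert_le
    by (intro weighted_mean_in_convex sum_pos) auto
  then show ?thesis
    by (simp add: learners_def)
qed

lemma round_loss_expert_le:
  assumes "norm (snd (s ! t)) \<le> 1"
  shows "round_loss (expert j) s t \<le> 4"
proof -
  have "norm (expert j (take t s) (fst (s ! t)) - snd (s ! t)) \<le> 2"
    using norm_triangle_ineq4[of "expert j (take t s) (fst (s ! t))" "snd (s ! t)"]
      norm_expert_le[of j "take t s" "fst (s ! t)"] assms
    by linarith
  then show ?thesis
    unfolding round_loss_def using power_mono[of _ 2 2] by force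
qed

lemma cum_loss_hedge_le:
  assumes "length s = T" "1 \<le> T" "0 < \<eta>"
    and X: "\<And>t. t < T \<Longrightarrow> fst (s ! t) \<in> l1_ball"
    and Y: "\<And>t. t < T \<Longrightarrow> norm (snd (s ! t)) \<le> 1"
  shows "cum_loss (hedge T \<eta>) s
    \<le> cum_loss (\<lambda>_. selector k) s + 2 + ln (card (experts T)) / \<eta> + 8 * \<eta> * T"
proof -
  obtain j where j: "j \<in> experts T" "cum_loss (expert j) s \<le> cum_loss (\<lambda>_. selector k) s + 2"
    using exists_expert_close[OF assms(1,2) X Y] by blast
  have "(\<Sum>t<T. round_loss (hedge T \<eta>) s t)
      \<le> (\<Sum>t<T. round_loss (expert j) s t) + ln (card (experts T)) / \<eta> + \<eta> * 4\<^sup>2 * T / 2"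
  proof (rule exp_weights_regret[OF finite_experts j(1) \<open>0 < \<eta>\<close>])
    fix j' t assume "t < T"
    then show "0 \<le> round_loss (expert j') s t \<and> round_loss (expert j') s t \<le> 4"
      using Y round_loss_expert_le by (simp add: round_loss_def)
  next
    fix t assume "t < T"
    then have weights: "cum_loss (expert j') (take t s) = (\<Sum>t'<t. round_loss (expert j') s t')" for j'
      using \<open>length s = T\<close> by (simp add: cum_loss_take)
    have "round_loss (hedge T \<eta>) s t
      \<le> (\<Sum>j'\<in>experts T. exp (- \<eta> * cum_loss (expert j') (take t s)) * round_loss (expert j') s t)
        / (\<Sum>j'\<in>experts T. exp (- \<eta> * cum_loss (expert j') (take t s)))"
      unfolding round_loss_def hedge_def using finite_experts experts_nonempty \<open>1 \<le> T\<close>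
      by (intro dist_sq_weighted_mean_le sum_pos) auto
    then show "round_loss (hedge T \<eta>) s t
      \<le> (\<Sum>j'\<in>experts T. exp (- \<eta> * (\<Sum>t'<t. round_loss (expert j') s t')) * round_loss (expert j') s t)
        / (\<Sum>j'\<in>experts T. exp (- \<eta> * (\<Sum>t'<t. round_loss (expert j') s t')))"
      by (simp only: weights)
  qed
  with j(2) \<open>length s = T\<close> show ?thesis
    by (simp add: cum_loss_eq_sum_round_loss)
qed

lemma regret_hedge_le:
  assumes "1 \<le> T" "0 < \<eta>"
  shows "regret l1_ball (cball 0 1) T (range selector) (return_pmf (hedge T \<eta>))
    \<le> ereal (2 + ln (card (experts T)) / \<eta> + 8 * \<eta> * T)"
  unfolding regret_def
proof (rule SUP_least)
  fix s :: "('a \<times> 'a) list"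
  assume "s \<in> {s. length s = T \<and> set s \<subseteq> l1_ball \<times> cball 0 1}"
  then have s: "length s = T" "\<And>t. t < T \<Longrightarrow> fst (s ! t) \<in> l1_ball \<and> norm (snd (s ! t)) \<le> 1"
    by (auto dest!: nth_mem simp: mem_Times_iff)
  have "cum_loss (hedge T \<eta>) s - (2 + ln (card (experts T)) / \<eta> + 8 * \<eta> * T)
      \<le> best_loss (range selector) s"
    unfolding best_loss_def
  proof (rule cINF_greatest)
    fix f assume "f \<in> range selector"
    then obtain k where "f = selector k" by blast
    with cum_loss_hedge_le[of s T \<eta> k] s assms show "cum_loss (hedge T \<eta>) s
        - (2 + ln (card (experts T)) / \<eta> + 8 * \<eta> * T)
      \<le> (\<Sum>t<length s. (norm (f (fst (s ! t)) - snd (s ! t)))\<^sup>2)"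
      by (simp add: cum_loss_def)
  qed simp
  then show "ereal (measure_pmf.expectation (return_pmf (hedge T \<eta>))
      (\<lambda>A. cum_loss A s - best_loss (range selector) s))
    \<le> ereal (2 + ln (card (experts T)) / \<eta> + 8 * \<eta> * T)"
    by simp
qed

end

theorem theorem6:
  fixes e :: "nat \<Rightarrow> 'a::{real_inner, complete_space}"
  assumes orthonormal: "\<forall>i j. e i \<bullet> e j = (if i = j then 1 else 0)"
    and complete_basis: "closure (span (range e)) = UNIV"
  defines "X \<equiv> {v. summable (\<lambda>n. \<bar>v \<bullet> e n\<bar>) \<and> (\<Sum>n. \<bar>v \<bullet> e n\<bar>) \<le> 1}"
    and "Y \<equiv> cball (0::'a) 1"
  shows "\<exists>F. F \<subseteq> {f. trace_class f} \<and>
           (\<forall>T::nat. T \<ge> 1 \<longrightarrow>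
              seq_rad X Y T F \<ge> ereal (real T / 2) \<and>
              (INF P\<in>learners Y. regret X Y T F P)
                 \<le> ereal (2 + 8 * sqrt (real T * ln (2 * real T))))"
proof -
  interpret orthonormal_seq e
    using orthonormal by unfold_locales blast
  have X: "X = l1_ball"
    unfolding X_def l1_ball_def ..
  show ?thesis
  proof (intro exI[of _ "range selector"] conjI allI impI)
    show "range selector \<subseteq> {f. trace_class f}"
      using trace_class_selector by blast
  next
    fix T :: nat
    show "ereal (real T / 2) \<le> seq_rad X Y T (range selector)"
      using e_in_l1_ball by (intro seq_rad_selectors_ge) (auto simp: X Y_def)
  next
    fix T :: nat
    assume "1 \<le> T"
    define \<eta> where "\<eta> = sqrt (ln (card (experts T)) / (8 * real T))"
    note rate = experts_rate[OF \<open>1 \<le> T\<close> \<eta>_def]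
    have "regret X Y T (range selector) (return_pmf (hedge T \<eta>))
        \<le> ereal (2 + ln (card (experts T)) / \<eta> + 8 * \<eta> * T)"
      unfolding X Y_def using \<open>1 \<le> T\<close> rate(1) by (rule regret_hedge_le)
    also have "\<dots> \<le> ereal (2 + 8 * sqrt (real T * ln (2 * real T)))"
      using rate(2) by (simp add: mult_ac)
    finally show "(INF P\<in>learners Y. regret X Y T (range selector) P)
        \<le> ereal (2 + 8 * sqrt (real T * ln (2 * real T)))"
      unfolding Y_def by (rule INF_lower2[OF hedge_in_learners[OF \<open>1 \<le> T\<close>]])
  qed
qed

end
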